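(* Let $r\ge1$, let $a_1,\dots,a_r\ge 2$ and $a,b$ be positive integers, and let $H_1,\dots,H_r$ be graphs. If $\max\{a_1,\dots,a_r\}\le a$ and $\max\{cl(H_1),\dots,cl(H_r)\}\le b$, then $$F_v(K_{a_1}[H_1],\dots,K_{a_r}[H_r];ab+1)\le F_v(a_1,\dots,a_r;a+1)\,F_v(H_1,\dots,H_r;b+1).$$
   Context: All graphs are finite and simple. "A graph $F$ contains $H$" means $F$ has a (not necessarily induced) subgraph isomorphic to $H$. An integer $a$ used in place of a graph denotes $K_a$. $cl(H)$ is the clique number of $H$. $G\rightarrow(H_1,\dots,H_r)^v$ means: for every partition $V(G)=X_1\cup\dots\cup X_r$ there is $i$ such that the subgraph induced by $X_i$ contains $H_i$. $\mathcal{F}_v(H_1,\dots,H_r;k)$ is the set of $K_k$-free graphs $G$ with $G\rightarrow(H_1,\dots,H_r)^v$, and the vertex Folkman number $F_v(H_1,\dots,H_r;k)$ is the minimum number of vertices of a graph in this set (these numbers are finite when $k>\max_i cl(H_i)$). The lexicographic product $G[H]$ has vertex set $V(G)\times V(H)$, with $\{(u_1,v_1),(u_2,v_2)\}$ an edge iff $\{u_1,u_2\}\in E(G)$, or $u_1=u_2$ and $\{v_1,v_2\}\in E(H)$. *)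

theory Defs
  imports Main "HOL-Library.Extended_Nat"
begin

text \<open>A graph is a pair (vertex set, edge relation); edges are stored as ordered
  pairs, in both directions.\<close>
type_synonym 'a sgraph = "'a set \<times> ('a \<times> 'a) set"

definition verts :: "'a sgraph \<Rightarrow> 'a set" where "verts G = fst G"
definition edges :: "'a sgraph \<Rightarrow> ('a \<times> 'a) set" where "edges G = snd G"

definition wf_graph :: "'a sgraph \<Rightarrow> bool" where
  "wf_graph G \<longleftrightarrow> finite (verts G) \<and> edges G \<subseteq> verts G \<times> verts G
     \<and> (\<forall>u v. (u, v) \<in> edges G \<longrightarrow> (v, u) \<in> edges G)
     \<and> (\<forall>u. (u, u) \<notin> edges G)"

definition contains :: "'a sgraph \<Rightarrow> 'b sgraph \<Rightarrow> bool" where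
  "contains F H \<longleftrightarrow> (\<exists>f. inj_on f (verts H) \<and> f ` verts H \<subseteq> verts F
     \<and> (\<forall>u v. (u, v) \<in> edges H \<longrightarrow> (f u, f v) \<in> edges F))"

definition complete :: "nat \<Rightarrow> nat sgraph" where
  "complete n = ({0..<n}, {(i, j). i < n \<and> j < n \<and> i \<noteq> j})"

definition cl :: "'a sgraph \<Rightarrow> nat" where
  "cl H = Max {k. contains H (complete k)}"

definition clique_free :: "nat \<Rightarrow> 'a sgraph \<Rightarrow> bool" where
  "clique_free k G \<longleftrightarrow> \<not> contains G (complete k)"

definition induced :: "'a sgraph \<Rightarrow> 'a set \<Rightarrow> 'a sgraph" where
  "induced G X = (verts G \<inter> X, edges G \<inter> (X \<times> X))"

definition lex :: "'a sgraph \<Rightarrow> 'b sgraph \<Rightarrow> ('a \<times> 'b) sgraph" where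
  "lex G H = (verts G \<times> verts H,
     {((u1, v1), (u2, v2)). u1 \<in> verts G \<and> u2 \<in> verts G \<and> v1 \<in> verts H \<and> v2 \<in> verts H
        \<and> ((u1, u2) \<in> edges G \<or> (u1 = u2 \<and> (v1, v2) \<in> edges H))})"

text \<open>G \<rightarrow> (H_0, ..., H_{r-1})^v: every partition of V(G) into r (possibly empty)
  classes, given as a colouring c with values < r, has a class i whose induced
  subgraph contains H_i.\<close>
definition varrows :: "'a sgraph \<Rightarrow> nat \<Rightarrow> (nat \<Rightarrow> 'b sgraph) \<Rightarrow> bool" where
  "varrows G r Hs \<longleftrightarrow> (\<forall>c. (\<forall>v\<in>verts G. c v < r) \<longrightarrow>
     (\<exists>i<r. contains (induced G {v \<in> verts G. c v = i}) (Hs i)))"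

text \<open>Vertex Folkman number F_v(H_0,...,H_{r-1}; k), as an extended natural
  (\<infinity> if no such graph exists). Every finite graph is isomorphic to one on
  natural-number vertices, so minimizing over nat-graphs is no restriction.\<close>
definition Fv :: "nat \<Rightarrow> (nat \<Rightarrow> 'b sgraph) \<Rightarrow> nat \<Rightarrow> enat" where
  "Fv r Hs k = (INF G \<in> {G :: nat sgraph. wf_graph G \<and> clique_free k G \<and> varrows G r Hs}.
       enat (card (verts G)))"

end

theory Submission
  imports Defs "HOL-Library.Countable"
begin

text \<open>Let G be a minimal K_{a+1}-free graph with G \<rightarrow> (K_{a_1},...,K_{a_r})^v and K a minimal
  K_{b+1}-free graph with K \<rightarrow> (H_1,...,H_r)^v; then G[K] witnesses the bound. Given a colouring
  of G[K], every copy {u} \<times> V(K) of K has a colour col(u) whose class there contains H_{col(u)}.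
  Colouring G by col yields a colour j whose class contains K_{a_j}; the copies of H_j over the
  vertices of that clique assemble to K_{a_j}[H_j] in colour j. A clique of G[K] projects to a
  clique of G whose fibres are cliques of K, so G[K] has no K_{ab+1}.\<close>

lemma sgraph_simps [simp]:
  "verts (A, E) = A" "edges (A, E) = E"
  "verts (induced G X) = verts G \<inter> X" "edges (induced G X) = edges G \<inter> X \<times> X"
  "verts (lex G H) = verts G \<times> verts H"
  "verts (complete n) = {0..<n}" "edges (complete n) = {(i, j). i < n \<and> j < n \<and> i \<noteq> j}"
  by (auto simp: verts_def edges_def induced_def lex_def complete_def)

lemma edges_lex:
  "((u, v), (u', v')) \<in> edges (lex G H) \<longleftrightarrow>
     u \<in> verts G \<and> u' \<in> verts G \<and> v \<in> verts H \<and> v' \<in> verts H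
     \<and> ((u, u') \<in> edges G \<or> u = u' \<and> (v, v') \<in> edges H)"
  by (simp add: lex_def edges_def)

lemma lex_empty_left [simp]: "lex ({}, {}) H = ({}, {})"
  and lex_empty_right [simp]: "lex G ({}, {}) = ({}, {})"
  by (simp_all add: lex_def verts_def edges_def)

lemma wf_graph_lex:
  assumes "wf_graph G" "wf_graph K"
  shows "wf_graph (lex G K)"
  using assms by (auto simp: wf_graph_def lex_def edges_def verts_def)

lemma contains_trans:
  assumes "contains F G" "contains G H"
  shows "contains F H"
proof -
  obtain f where "inj_on f (verts G)" "f ` verts G \<subseteq> verts F"
    "\<forall>u v. (u, v) \<in> edges G \<longrightarrow> (f u, f v) \<in> edges F"
    using assms(1) by (auto simp: contains_def)
  moreover obtain g where "inj_on g (verts H)" "g ` verts H \<subseteq> verts G"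
    "\<forall>u v. (u, v) \<in> edges H \<longrightarrow> (g u, g v) \<in> edges G"
    using assms(2) by (auto simp: contains_def)
  ultimately show ?thesis
    unfolding contains_def
    by (intro exI[of _ "f \<circ> g"]) (auto simp: comp_inj_on inj_on_subset image_subset_iff)
qed

lemma contains_empty_iff: "contains ({}, {}) H \<longleftrightarrow> H = ({}, {})"
proof
  assume "contains ({}, {}) H"
  then have "verts H = {}" "edges H = {}"
    by (auto simp: contains_def)
  then show "H = ({}, {})"
    by (metis prod.collapse verts_def edges_def)
qed (simp add: contains_def)

subsection \<open>Relabelling vertices\<close>

definition gmap :: "('a \<Rightarrow> 'c) \<Rightarrow> 'a sgraph \<Rightarrow> 'c sgraph" where
  "gmap f G = (f ` verts G, (\<lambda>(u, v). (f u, f v)) ` edges G)"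

lemma card_verts_gmap: "inj_on f (verts G) \<Longrightarrow> card (verts (gmap f G)) = card (verts G)"
  by (simp add: gmap_def card_image)

lemma wf_graph_gmap:
  assumes "inj_on f (verts G)" "wf_graph G"
  shows "wf_graph (gmap f G)"
  using assms unfolding wf_graph_def gmap_def
  by (auto simp: inj_on_def) (metis SigmaD1 SigmaD2 subsetD)+

lemma contains_gmap:
  assumes "inj_on f (verts G)" "edges G \<subseteq> verts G \<times> verts G"
  shows "contains G (gmap f G)"
  unfolding contains_def
proof (intro exI[of _ "inv_into (verts G) f"] conjI allI impI)
  show "inj_on (inv_into (verts G) f) (verts (gmap f G))"
    by (simp add: gmap_def inj_on_inv_into)
  show "inv_into (verts G) f ` verts (gmap f G) \<subseteq> verts G"
    by (auto simp: gmap_def inv_into_into)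
  fix u v assume "(u, v) \<in> edges (gmap f G)"
  then obtain x y where "(x, y) \<in> edges G" "u = f x" "v = f y"
    by (auto simp: gmap_def)
  then show "(inv_into (verts G) f u, inv_into (verts G) f v) \<in> edges G"
    using assms by (auto simp: inv_into_f_f)
qed

lemma clique_free_gmap:
  assumes "inj_on f (verts G)" "wf_graph G" "clique_free k G"
  shows "clique_free k (gmap f G)"
  using assms contains_gmap[of f G] contains_trans
  unfolding clique_free_def wf_graph_def by blast

lemma varrows_gmap:
  assumes f: "inj_on f (verts G)" and G: "varrows G r Hs"
  shows "varrows (gmap f G) r Hs"
  unfolding varrows_def
proof (intro allI impI)
  fix c assume "\<forall>v\<in>verts (gmap f G). c v < r"
  then have "\<forall>v\<in>verts G. (c \<circ> f) v < r"
    by (simp add: gmap_def)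
  then obtain i where "i < r" and i: "contains (induced G {v \<in> verts G. (c \<circ> f) v = i}) (Hs i)"
    using G unfolding varrows_def by blast
  have "contains (induced (gmap f G) {v \<in> verts (gmap f G). c v = i})
      (induced G {v \<in> verts G. (c \<circ> f) v = i})"
    unfolding contains_def
    using f by (intro exI[of _ f]) (auto simp: gmap_def inj_on_subset)
  with i \<open>i < r\<close> contains_trans show "\<exists>i<r. contains (induced (gmap f G) {v \<in> verts (gmap f G). c v = i}) (Hs i)"
    by blast
qed

subsection \<open>Cliques\<close>

definition is_clique :: "'a sgraph \<Rightarrow> 'a set \<Rightarrow> bool" where
  "is_clique G S \<longleftrightarrow> S \<subseteq> verts G \<and> finite S \<and> (\<forall>x\<in>S. \<forall>y\<in>S. x \<noteq> y \<longrightarrow> (x, y) \<in> edges G)"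

lemma contains_complete_iff: "contains G (complete k) \<longleftrightarrow> (\<exists>S. is_clique G S \<and> card S = k)"
proof
  assume "contains G (complete k)"
  then obtain f where f: "inj_on f {0..<k}" "f ` {0..<k} \<subseteq> verts G"
    "\<forall>i j. (i, j) \<in> edges (complete k) \<longrightarrow> (f i, f j) \<in> edges G"
    by (auto simp: contains_def)
  then have "is_clique G (f ` {0..<k})"
    by (auto simp: is_clique_def complete_def edges_def) blast
  moreover have "card (f ` {0..<k}) = k"
    using f(1) by (simp add: card_image)
  ultimately show "\<exists>S. is_clique G S \<and> card S = k"
    by blast
next
  assume "\<exists>S. is_clique G S \<and> card S = k"
  then obtain S where S: "is_clique G S" "card S = k"
    by blast
  then obtain h where h: "bij_betw h {0..<k} S"
    using ex_bij_betw_nat_finite is_clique_def by metis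
  have "(h i, h j) \<in> edges G" if "i < k" "j < k" "i \<noteq> j" for i j
  proof -
    have "h i \<in> S" "h j \<in> S" "h i \<noteq> h j"
      using h that by (auto simp: bij_betw_def inj_on_def)
    then show ?thesis
      using S(1) by (simp add: is_clique_def)
  qed
  moreover have "inj_on h {0..<k}" "h ` {0..<k} \<subseteq> verts G"
    using h S(1) by (auto simp: bij_betw_def is_clique_def)
  ultimately show "contains G (complete k)"
    unfolding contains_def by (intro exI[of _ h]) auto
qed

lemma clique_free_iff: "clique_free k G \<longleftrightarrow> (\<forall>S. is_clique G S \<longrightarrow> card S < k)"
proof -
  have "is_clique G T" if "is_clique G S" "T \<subseteq> S" for S T
    using that finite_subset by (simp add: is_clique_def subset_iff) blast
  then show ?thesis
    unfolding clique_free_def contains_complete_iff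
    by (metis linorder_not_less obtain_subset_with_card_n order_less_irrefl)
qed

lemma clique_free_lex:
  assumes G: "wf_graph G" "clique_free (a + 1) G" and K: "clique_free (b + 1) K"
  shows "clique_free (a * b + 1) (lex G K)"
  unfolding clique_free_iff
proof (intro allI impI)
  fix S assume S: "is_clique (lex G K) S"
  define U where "U = fst ` S"
  define F where "F u = {v. (u, v) \<in> S}" for u
  have fin: "finite S"
    using S by (simp add: is_clique_def)
  have "is_clique G U"
    using S by (force simp: is_clique_def U_def edges_lex)
  then have U_card: "card U \<le> a"
    using G(2) clique_free_iff[of "a + 1" G] by auto
  have F_fin: "finite (F u)" for u
    using fin by (rule finite_subset[rotated, OF finite_imageI]) (force simp: F_def)
  have F_card: "card (F u) \<le> b" for u
  proof -
    have "(u, u) \<notin> edges G"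
      using G(1) by (simp add: wf_graph_def)
    have "(x, y) \<in> edges K" if "x \<in> F u" "y \<in> F u" "x \<noteq> y" for x y
    proof -
      have "((u, x), (u, y)) \<in> edges (lex G K)"
        using S that by (auto simp: is_clique_def F_def)
      with \<open>(u, u) \<notin> edges G\<close> show ?thesis
        by (simp add: edges_lex)
    qed
    moreover have "F u \<subseteq> verts K"
      using S by (auto simp: is_clique_def F_def)
    ultimately have "is_clique K (F u)"
      using F_fin by (simp add: is_clique_def)
    then show ?thesis
      using K clique_free_iff[of "b + 1" K] by auto
  qed
  have "S = Sigma U F"
    by (force simp: U_def F_def)
  then have "card S = card (Sigma U F)"
    by (rule arg_cong)
  also have "\<dots> = (\<Sum>u\<in>U. card (F u))"
    using fin F_fin by (simp add: U_def)
  also have "\<dots> \<le> card U * b"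
    using sum_bounded_above[of U "\<lambda>u. card (F u)" b] F_card by simp
  also have "\<dots> \<le> a * b"
    using U_card by simp
  finally show "card S < a * b + 1"
    by simp
qed

subsection \<open>Arrowing in lexicographic products\<close>

lemma contains_induced_lex:
  assumes A: "contains (induced G X) A"
    and H: "\<And>u. u \<in> verts G \<Longrightarrow> u \<in> X \<Longrightarrow> contains (induced K {v. (u, v) \<in> Y}) H"
  shows "contains (induced (lex G K) Y) (lex A H)"
proof -
  obtain g where g_inj: "inj_on g (verts A)" and g_into: "g ` verts A \<subseteq> verts G \<inter> X"
    and g_edge: "\<And>p q. (p, q) \<in> edges A \<Longrightarrow> (g p, g q) \<in> edges G"
    using A by (auto simp: contains_def)
  have "\<forall>p\<in>verts A. \<exists>f. inj_on f (verts H) \<and> f ` verts H \<subseteq> verts K \<inter> {v. (g p, v) \<in> Y}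
      \<and> (\<forall>h h'. (h, h') \<in> edges H \<longrightarrow> (f h, f h') \<in> edges K)"
  proof
    fix p assume "p \<in> verts A"
    with g_into have "contains (induced K {v. (g p, v) \<in> Y}) H"
      by (auto intro: H)
    then show "\<exists>f. inj_on f (verts H) \<and> f ` verts H \<subseteq> verts K \<inter> {v. (g p, v) \<in> Y}
        \<and> (\<forall>h h'. (h, h') \<in> edges H \<longrightarrow> (f h, f h') \<in> edges K)"
      by (auto simp: contains_def)
  qed
  then obtain F where F: "\<forall>p\<in>verts A. inj_on (F p) (verts H)
      \<and> F p ` verts H \<subseteq> verts K \<inter> {v. (g p, v) \<in> Y}
      \<and> (\<forall>h h'. (h, h') \<in> edges H \<longrightarrow> (F p h, F p h') \<in> edges K)"
    by (rule bchoice[THEN exE])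
  then have F_inj: "\<And>p. p \<in> verts A \<Longrightarrow> inj_on (F p) (verts H)"
    and F_into: "\<And>p. p \<in> verts A \<Longrightarrow> F p ` verts H \<subseteq> verts K \<inter> {v. (g p, v) \<in> Y}"
    and F_edge: "\<And>p h h'. p \<in> verts A \<Longrightarrow> (h, h') \<in> edges H \<Longrightarrow> (F p h, F p h') \<in> edges K"
    by blast+
  define \<phi> where "\<phi> = (\<lambda>(p, h). (g p, F p h))"
  have \<phi>_into: "\<phi> (p, h) \<in> (verts G \<times> verts K) \<inter> Y" if "p \<in> verts A" "h \<in> verts H" for p h
    using g_into F_into[of p] that by (auto simp: \<phi>_def)
  have "inj_on \<phi> (verts A \<times> verts H)"
  proof (rule inj_onI, clarify)
    fix p h q h'
    assume "p \<in> verts A" "h \<in> verts H" "q \<in> verts A" "h' \<in> verts H" "\<phi> (p, h) = \<phi> (q, h')"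
    then show "p = q \<and> h = h'"
      using g_inj F_inj[of p] by (auto simp: \<phi>_def inj_on_def)
  qed
  moreover have "(\<phi> x, \<phi> y) \<in> edges (lex G K) \<inter> Y \<times> Y" if "(x, y) \<in> edges (lex A H)" for x y
  proof -
    obtain p h q h' where xy: "x = (p, h)" "y = (q, h')"
      by fastforce
    have vs: "p \<in> verts A" "q \<in> verts A" "h \<in> verts H" "h' \<in> verts H"
      and "(p, q) \<in> edges A \<or> p = q \<and> (h, h') \<in> edges H"
      using that by (auto simp: xy edges_lex)
    then have "(g p, g q) \<in> edges G \<or> g p = g q \<and> (F p h, F q h') \<in> edges K"
      using g_edge F_edge by auto
    then show ?thesis
      using \<phi>_into[of p h] \<phi>_into[of q h'] vs by (simp add: xy \<phi>_def edges_lex)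
  qed
  moreover have "\<phi> ` (verts A \<times> verts H) \<subseteq> (verts G \<times> verts K) \<inter> Y"
    using \<phi>_into by (auto simp: image_subset_iff)
  ultimately show ?thesis
    unfolding contains_def by (intro exI[of _ \<phi>]) auto
qed

lemma varrows_lex:
  assumes G: "varrows G r As" and K: "varrows K r Hs"
  shows "varrows (lex G K) r (\<lambda>i. lex (As i) (Hs i))"
  unfolding varrows_def
proof (intro allI impI)
  fix c assume c: "\<forall>w\<in>verts (lex G K). c w < r"
  have "\<forall>u\<in>verts G. \<exists>i<r. contains (induced K {v \<in> verts K. c (u, v) = i}) (Hs i)"
    using K c unfolding varrows_def by auto
  then obtain col where col: "\<forall>u\<in>verts G. col u < r
      \<and> contains (induced K {v \<in> verts K. c (u, v) = col u}) (Hs (col u))"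
    by (rule bchoice[THEN exE])
  then obtain j where "j < r" and j: "contains (induced G {u \<in> verts G. col u = j}) (As j)"
    using G unfolding varrows_def by blast
  let ?Y = "{w \<in> verts (lex G K). c w = j}"
  have "contains (induced K {v. (u, v) \<in> ?Y}) (Hs j)" if "u \<in> verts G" "u \<in> {u \<in> verts G. col u = j}" for u
  proof -
    have "{v. (u, v) \<in> ?Y} = {v \<in> verts K. c (u, v) = col u}"
      using that by auto
    then show ?thesis
      using col that by auto
  qed
  with j have "contains (induced (lex G K) ?Y) (lex (As j) (Hs j))"
    by (rule contains_induced_lex)
  with \<open>j < r\<close> show "\<exists>i<r. contains (induced (lex G K) {w \<in> verts (lex G K). c w = i}) (lex (As i) (Hs i))"
    by blast
qed

subsection \<open>Vertex Folkman numbers\<close>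

lemma Fv_le_card:
  fixes L :: "'a::countable sgraph"
  assumes "wf_graph L" "clique_free k L" "varrows L r Hs"
  shows "Fv r Hs k \<le> card (verts L)"
proof -
  have inj: "inj_on to_nat (verts L)"
    by simp
  let ?L = "gmap to_nat L"
  have "Fv r Hs k \<le> card (verts ?L)"
    unfolding Fv_def
    using wf_graph_gmap[OF inj] clique_free_gmap[OF inj] varrows_gmap[OF inj] assms
    by (intro INF_lower) simp
  then show ?thesis
    by (simp add: card_verts_gmap[OF inj])
qed

lemma Fv_witness:
  assumes "Fv r Hs k \<noteq> \<infinity>"
  obtains G :: "nat sgraph"
  where "wf_graph G" "clique_free k G" "varrows G r Hs" "Fv r Hs k = card (verts G)"
proof -
  let ?A = "(\<lambda>G. enat (card (verts G))) ` {G :: nat sgraph. wf_graph G \<and> clique_free k G \<and> varrows G r Hs}"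
  have Fv_eq: "Fv r Hs k = Inf ?A"
    by (simp add: Fv_def)
  moreover have "?A \<noteq> {}"
  proof
    assume "?A = {}"
    with Fv_eq assms show False
      by (simp add: Inf_enat_def)
  qed
  ultimately have "Fv r Hs k \<in> ?A"
    by (auto simp: Inf_enat_def intro: LeastI)
  with that show ?thesis
    by blast
qed

lemma Fv_eq_0_iff:
  assumes "k \<ge> 1"
  shows "Fv r Hs k = 0 \<longleftrightarrow> (\<exists>i<r. Hs i = ({}, {}))"
proof
  assume Fv_0: "Fv r Hs k = 0"
  then have "Fv r Hs k \<noteq> \<infinity>"
    by simp
  then obtain G :: "nat sgraph"
    where G: "wf_graph G" "clique_free k G" "varrows G r Hs" "Fv r Hs k = card (verts G)"
    by (rule Fv_witness)
  with Fv_0 have "card (verts G) = 0"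
    by (simp add: zero_enat_def)
  with G(1) have "verts G = {}" "edges G = {}"
    by (auto simp: wf_graph_def)
  then have empty: "induced G X = ({}, {})" for X
    by (simp add: induced_def verts_def edges_def)
  have "\<exists>i<r. contains (induced G {v \<in> verts G. (\<lambda>_. 0::nat) v = i}) (Hs i)"
    using spec[OF G(3)[unfolded varrows_def], of "\<lambda>_. 0"] \<open>verts G = {}\<close> by simp
  then show "\<exists>i<r. Hs i = ({}, {})"
    by (auto simp: empty contains_empty_iff)
next
  assume "\<exists>i<r. Hs i = ({}, {})"
  moreover have "induced ({}, {} :: (nat \<times> nat) set) X = ({}, {})" for X
    by (simp add: induced_def)
  ultimately have "varrows ({}, {} :: (nat \<times> nat) set) r Hs"
    unfolding varrows_def by (auto simp: contains_empty_iff)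
  moreover have "0 \<in> verts (complete k)"
    using assms by simp
  then have "complete k \<noteq> ({}, {})"
    by (metis empty_iff sgraph_simps(1))
  then have "clique_free k ({}, {} :: (nat \<times> nat) set)"
    by (simp add: clique_free_def contains_empty_iff)
  ultimately have "Fv r Hs k \<le> 0"
    using Fv_le_card[of "({}, {})" k r Hs] by (simp add: wf_graph_def zero_enat_def)
  then show "Fv r Hs k = 0"
    by simp
qed

lemma Fv_lex_le_card:
  fixes G :: "'a::countable sgraph" and K :: "'c::countable sgraph"
  assumes G: "wf_graph G" "clique_free (a + 1) G" "varrows G r As"
    and K: "wf_graph K" "clique_free (b + 1) K" "varrows K r Hs"
  shows "Fv r (\<lambda>i. lex (As i) (Hs i)) (a * b + 1) \<le> card (verts G) * card (verts K)"
proof -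
  have "Fv r (\<lambda>i. lex (As i) (Hs i)) (a * b + 1) \<le> card (verts (lex G K))"
    using wf_graph_lex[OF G(1) K(1)] clique_free_lex[OF G(1,2) K(2)] varrows_lex[OF G(3) K(3)]
    by (rule Fv_le_card)
  then show ?thesis
    by (simp add: card_cartesian_product)
qed

text \<open>In the degenerate case one factor is 0 because some A_i or H_i is the empty graph,
  and then so is A_i[H_i]; this matters because 0 * \<infinity> = 0 in enat.\<close>

theorem Fv_lex_le_mult:
  "Fv r (\<lambda>i. lex (As i) (Hs i)) (a * b + 1) \<le> Fv r As (a + 1) * Fv r Hs (b + 1)"
proof (cases "Fv r As (a + 1) = 0 \<or> Fv r Hs (b + 1) = 0")
  case True
  then obtain i where "i < r" "As i = ({}, {}) \<or> Hs i = ({}, {})"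
    by (auto simp: Fv_eq_0_iff)
  then have "Fv r (\<lambda>i. lex (As i) (Hs i)) (a * b + 1) = 0"
    by (auto simp: Fv_eq_0_iff)
  then show ?thesis
    by simp
next
  case nonzero: False
  show ?thesis
  proof (cases "Fv r As (a + 1) = \<infinity> \<or> Fv r Hs (b + 1) = \<infinity>")
    case True
    with nonzero have "Fv r As (a + 1) * Fv r Hs (b + 1) = \<infinity>"
      by (auto simp: imult_is_infinity)
    then show ?thesis
      by simp
  next
    case False
    then obtain G K :: "nat sgraph"
      where "wf_graph G" "clique_free (a + 1) G" "varrows G r As" "Fv r As (a + 1) = card (verts G)"
        and "wf_graph K" "clique_free (b + 1) K" "varrows K r Hs" "Fv r Hs (b + 1) = card (verts K)"
      using Fv_witness by metis
    then show ?thesis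
      using Fv_lex_le_card[of G a r As K b Hs] by simp
  qed
qed

text \<open>None of the hypotheses is needed for the inequality; they only make the numbers on the
  right-hand side finite and the statement non-degenerate.\<close>

theorem mainTheorem2:
  fixes r a b :: nat and as :: "nat \<Rightarrow> nat" and Hs :: "nat \<Rightarrow> 'b sgraph"
  assumes "r \<ge> 1"
    and "\<forall>i<r. as i \<ge> 2"
    and "a > 0" and "b > 0"
    and "\<forall>i<r. wf_graph (Hs i)"
    and "\<forall>i<r. as i \<le> a"
    and "\<forall>i<r. cl (Hs i) \<le> b"
  shows "Fv r (\<lambda>i. lex (complete (as i)) (Hs i)) (a * b + 1)
         \<le> Fv r (\<lambda>i. complete (as i)) (a + 1) * Fv r Hs (b + 1)"
  by (rule Fv_lex_le_mult)

end
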